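(* Every T-stationary point $(\bar x,\bar y)$ of the relaxation (R), regarded as an MPOC, is degenerate, i.e. at least one of the nondegeneracy conditions ND1–ND4 fails at $(\bar x,\bar y)$.
   Context: Let $f\in C^2(\mathbb{R}^n,\mathbb{R})$ and $s\in\{0,1,\dots,n-1\}$. Relaxation (R): minimize $f(x)$ over $(x,y)\in\mathbb{R}^{2n}$ s.t. $\sum_{i=1}^n y_i\ge n-s$, $y_i\le 1$, $x_iy_i=0$, $y_i\ge0$, $i=1,\dots,n$. This is an MPOC (in variables $z=(x,y)$) with no equality constraints, inequality constraints $g_0(z)=\sum_i y_i-(n-s)\ge0$ and $g_i(z)=1-y_i\ge0$, and orthogonality type constraints $F_{1,i}(z)F_{2,i}(z)=0$, $F_{2,i}(z)\ge0$ with $F_{1,i}(z)=x_i$, $F_{2,i}(z)=y_i$, $i=1,\dots,n$. General MPOC definitions (for $\min f$ s.t. $h_i=0$, $g_j\ge0$, $F_{1,m}F_{2,m}=0$, $F_{2,m}\ge0$): at a feasible $\bar z$, $J_0=\{j\mid g_j(\bar z)=0\}$, $a_{00}=\{m\mid F_{1,m}(\bar z)=0=F_{2,m}(\bar z)\}$, $a_{01}=\{m\mid F_{1,m}(\bar z)=0,F_{2,m}(\bar z)>0\}$, $a_{10}=\{m\mid F_{1,m}(\bar z)\ne0,F_{2,m}(\bar z)=0\}$. LICQ: $Dh_i$, $Dg_j$ ($j\in J_0$), $DF_{1,m}$ ($m\in a_{01}\cup a_{00}$), $DF_{2,m}$ ($m\in a_{10}\cup a_{00}$) at $\bar z$ linearly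 independent. T-stationary: there exist multipliers $\bar\lambda_i,\bar\mu_j$ ($j\in J_0$), $\bar\sigma_{1,m}$ ($a_{01}$), $\bar\sigma_{2,m}$ ($a_{10}$), $\bar\varrho_{1,m},\bar\varrho_{2,m}$ ($a_{00}$) with $Df=\sum\bar\lambda_iDh_i+\sum_{J_0}\bar\mu_jDg_j+\sum_{a_{01}}\bar\sigma_{1,m}DF_{1,m}+\sum_{a_{10}}\bar\sigma_{2,m}DF_{2,m}+\sum_{a_{00}}(\bar\varrho_{1,m}DF_{1,m}+\bar\varrho_{2,m}DF_{2,m})$ at $\bar z$, $\bar\mu_j\ge0$, and $\bar\varrho_{1,m}=0$ or $\bar\varrho_{2,m}\le0$ for $m\in a_{00}$. Lagrangian $L=f-\sum\bar\lambda_ih_i-\sum_{J_0}\bar\mu_jg_j-\sum_{a_{01}}\bar\sigma_{1,m}F_{1,m}-\sum_{a_{10}}\bar\sigma_{2,m}F_{2,m}-\sum_{a_{00}}(\bar\varrho_{1,m}F_{1,m}+\bar\varrho_{2,m}F_{2,m})$; tangent space $T=\{\xi\mid Dh_i(\bar z)\xi=0,\ Dg_j(\bar z)\xi=0\ (j\in J_0),\ DF_{1,m}(\bar z)\xi=0\ (m\in a_{01}\cup a_{00}),\ DF_{2,m}(\bar z)\xi=0\ (m\in a_{10}\cup a_{00})\}$. Nondegeneracy of a T-stationary point: ND1 LICQ holds; ND2 $\bar\mu_j>0$ for all $j\in J_0$; ND3 $\bar\varrho_{1,m}\ne0$ and $\bar\varrho_{2,m}<0$ for all $m\in a_{00}$;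 ND4 $D^2L(\bar z)$ restricted to $T$ is nonsingular. A T-stationary point is degenerate if it is not nondegenerate. *)

theory Defs
  imports "HOL-Analysis.Analysis"
begin

text \<open>An MPOC: minimize fo(z) s.t. h_i(z) = 0 (i in I), g_j(z) >= 0 (j in J),
  F1_m(z) * F2_m(z) = 0, F2_m(z) >= 0 (m in M).  Derivatives are Frechet
  derivatives, i.e. linear functionals on the z-space.\<close>

abbreviation Dfun :: "('z::euclidean_space \<Rightarrow> real) \<Rightarrow> 'z \<Rightarrow> 'z \<Rightarrow> real" where
  "Dfun \<phi> z \<equiv> frechet_derivative \<phi> (at z)"

definition hess :: "('z::euclidean_space \<Rightarrow> real) \<Rightarrow> 'z \<Rightarrow> 'z \<Rightarrow> 'z \<Rightarrow> real" where
  "hess \<phi> z \<xi> \<eta> = frechet_derivative (\<lambda>w. frechet_derivative \<phi> (at w) \<eta>) (at z) \<xi>"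

definition C2 :: "('z::euclidean_space \<Rightarrow> real) \<Rightarrow> bool" where
  "C2 \<phi> \<longleftrightarrow> (\<exists>\<phi>' \<phi>''.
      (\<forall>x. (\<phi> has_derivative \<phi>' x) (at x)) \<and>
      (\<forall>x \<eta>. ((\<lambda>w. \<phi>' w \<eta>) has_derivative (\<lambda>\<xi>. \<phi>'' x \<xi> \<eta>)) (at x)) \<and>
      (\<forall>\<xi> \<eta>. continuous_on UNIV (\<lambda>x. \<phi>'' x \<xi> \<eta>)))"

definition mpoc_feasible ::
  "'i set \<Rightarrow> ('i \<Rightarrow> 'z \<Rightarrow> real) \<Rightarrow> 'j set \<Rightarrow> ('j \<Rightarrow> 'z \<Rightarrow> real) \<Rightarrow>
   'm set \<Rightarrow> ('m \<Rightarrow> 'z \<Rightarrow> real) \<Rightarrow> ('m \<Rightarrow> 'z \<Rightarrow> real) \<Rightarrow> 'z \<Rightarrow> bool" where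
  "mpoc_feasible I h J g M F1 F2 z \<longleftrightarrow>
     (\<forall>i\<in>I. h i z = 0) \<and> (\<forall>j\<in>J. g j z \<ge> 0) \<and>
     (\<forall>m\<in>M. F1 m z * F2 m z = 0 \<and> F2 m z \<ge> 0)"

definition J0 :: "'j set \<Rightarrow> ('j \<Rightarrow> 'z \<Rightarrow> real) \<Rightarrow> 'z \<Rightarrow> 'j set" where
  "J0 J g z = {j\<in>J. g j z = 0}"

definition a00 :: "'m set \<Rightarrow> ('m \<Rightarrow> 'z \<Rightarrow> real) \<Rightarrow> ('m \<Rightarrow> 'z \<Rightarrow> real) \<Rightarrow> 'z \<Rightarrow> 'm set" where
  "a00 M F1 F2 z = {m\<in>M. F1 m z = 0 \<and> F2 m z = 0}"

definition a01 :: "'m set \<Rightarrow> ('m \<Rightarrow> 'z \<Rightarrow> real) \<Rightarrow> ('m \<Rightarrow> 'z \<Rightarrow> real) \<Rightarrow> 'z \<Rightarrow> 'm set" where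
  "a01 M F1 F2 z = {m\<in>M. F1 m z = 0 \<and> F2 m z > 0}"

definition a10 :: "'m set \<Rightarrow> ('m \<Rightarrow> 'z \<Rightarrow> real) \<Rightarrow> ('m \<Rightarrow> 'z \<Rightarrow> real) \<Rightarrow> 'z \<Rightarrow> 'm set" where
  "a10 M F1 F2 z = {m\<in>M. F1 m z \<noteq> 0 \<and> F2 m z = 0}"

text \<open>LICQ: the family of active constraint gradients is linearly independent
  (written out: the only vanishing linear combination is the trivial one).\<close>
definition mpoc_LICQ ::
  "'i set \<Rightarrow> ('i \<Rightarrow> 'z::euclidean_space \<Rightarrow> real) \<Rightarrow> 'j set \<Rightarrow> ('j \<Rightarrow> 'z \<Rightarrow> real) \<Rightarrow>
   'm set \<Rightarrow> ('m \<Rightarrow> 'z \<Rightarrow> real) \<Rightarrow> ('m \<Rightarrow> 'z \<Rightarrow> real) \<Rightarrow> 'z \<Rightarrow> bool" where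
  "mpoc_LICQ I h J g M F1 F2 z \<longleftrightarrow>
     (\<forall>(lam::'i \<Rightarrow> real) (mu::'j \<Rightarrow> real) (c1::'m \<Rightarrow> real) (c2::'m \<Rightarrow> real).
        (\<forall>\<xi>. (\<Sum>i\<in>I. lam i * Dfun (h i) z \<xi>)
            + (\<Sum>j\<in>J0 J g z. mu j * Dfun (g j) z \<xi>)
            + (\<Sum>m\<in>a01 M F1 F2 z \<union> a00 M F1 F2 z. c1 m * Dfun (F1 m) z \<xi>)
            + (\<Sum>m\<in>a10 M F1 F2 z \<union> a00 M F1 F2 z. c2 m * Dfun (F2 m) z \<xi>) = 0)
        \<longrightarrow> (\<forall>i\<in>I. lam i = 0) \<and> (\<forall>j\<in>J0 J g z. mu j = 0)
           \<and> (\<forall>m\<in>a01 M F1 F2 z \<union> a00 M F1 F2 z. c1 m = 0)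
           \<and> (\<forall>m\<in>a10 M F1 F2 z \<union> a00 M F1 F2 z. c2 m = 0))"

definition mpoc_T_mult ::
  "('z::euclidean_space \<Rightarrow> real) \<Rightarrow> 'i set \<Rightarrow> ('i \<Rightarrow> 'z \<Rightarrow> real) \<Rightarrow> 'j set \<Rightarrow> ('j \<Rightarrow> 'z \<Rightarrow> real) \<Rightarrow>
   'm set \<Rightarrow> ('m \<Rightarrow> 'z \<Rightarrow> real) \<Rightarrow> ('m \<Rightarrow> 'z \<Rightarrow> real) \<Rightarrow> 'z \<Rightarrow>
   ('i \<Rightarrow> real) \<Rightarrow> ('j \<Rightarrow> real) \<Rightarrow> ('m \<Rightarrow> real) \<Rightarrow> ('m \<Rightarrow> real) \<Rightarrow>
   ('m \<Rightarrow> real) \<Rightarrow> ('m \<Rightarrow> real) \<Rightarrow> bool" where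
  "mpoc_T_mult fo I h J g M F1 F2 z lam mu s1 s2 r1 r2 \<longleftrightarrow>
     (\<forall>\<xi>. Dfun fo z \<xi> =
            (\<Sum>i\<in>I. lam i * Dfun (h i) z \<xi>)
          + (\<Sum>j\<in>J0 J g z. mu j * Dfun (g j) z \<xi>)
          + (\<Sum>m\<in>a01 M F1 F2 z. s1 m * Dfun (F1 m) z \<xi>)
          + (\<Sum>m\<in>a10 M F1 F2 z. s2 m * Dfun (F2 m) z \<xi>)
          + (\<Sum>m\<in>a00 M F1 F2 z. r1 m * Dfun (F1 m) z \<xi> + r2 m * Dfun (F2 m) z \<xi>)) \<and>
     (\<forall>j\<in>J0 J g z. mu j \<ge> 0) \<and>
     (\<forall>m\<in>a00 M F1 F2 z. r1 m = 0 \<or> r2 m \<le> 0)"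

definition mpoc_T_stationary ::
  "('z::euclidean_space \<Rightarrow> real) \<Rightarrow> 'i set \<Rightarrow> ('i \<Rightarrow> 'z \<Rightarrow> real) \<Rightarrow> 'j set \<Rightarrow> ('j \<Rightarrow> 'z \<Rightarrow> real) \<Rightarrow>
   'm set \<Rightarrow> ('m \<Rightarrow> 'z \<Rightarrow> real) \<Rightarrow> ('m \<Rightarrow> 'z \<Rightarrow> real) \<Rightarrow> 'z \<Rightarrow> bool" where
  "mpoc_T_stationary fo I h J g M F1 F2 z \<longleftrightarrow>
     mpoc_feasible I h J g M F1 F2 z \<and>
     (\<exists>lam mu s1 s2 r1 r2. mpoc_T_mult fo I h J g M F1 F2 z lam mu s1 s2 r1 r2)"

text \<open>Lagrangian, with index sets taken at the point zb.\<close>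
definition mpoc_lagrangian ::
  "('z::euclidean_space \<Rightarrow> real) \<Rightarrow> 'i set \<Rightarrow> ('i \<Rightarrow> 'z \<Rightarrow> real) \<Rightarrow> 'j set \<Rightarrow> ('j \<Rightarrow> 'z \<Rightarrow> real) \<Rightarrow>
   'm set \<Rightarrow> ('m \<Rightarrow> 'z \<Rightarrow> real) \<Rightarrow> ('m \<Rightarrow> 'z \<Rightarrow> real) \<Rightarrow> 'z \<Rightarrow>
   ('i \<Rightarrow> real) \<Rightarrow> ('j \<Rightarrow> real) \<Rightarrow> ('m \<Rightarrow> real) \<Rightarrow> ('m \<Rightarrow> real) \<Rightarrow>
   ('m \<Rightarrow> real) \<Rightarrow> ('m \<Rightarrow> real) \<Rightarrow> 'z \<Rightarrow> real" where
  "mpoc_lagrangian fo I h J g M F1 F2 zb lam mu s1 s2 r1 r2 = (\<lambda>z.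
      fo z - (\<Sum>i\<in>I. lam i * h i z)
           - (\<Sum>j\<in>J0 J g zb. mu j * g j z)
           - (\<Sum>m\<in>a01 M F1 F2 zb. s1 m * F1 m z)
           - (\<Sum>m\<in>a10 M F1 F2 zb. s2 m * F2 m z)
           - (\<Sum>m\<in>a00 M F1 F2 zb. r1 m * F1 m z + r2 m * F2 m z))"

definition mpoc_tangent ::
  "'i set \<Rightarrow> ('i \<Rightarrow> 'z::euclidean_space \<Rightarrow> real) \<Rightarrow> 'j set \<Rightarrow> ('j \<Rightarrow> 'z \<Rightarrow> real) \<Rightarrow>
   'm set \<Rightarrow> ('m \<Rightarrow> 'z \<Rightarrow> real) \<Rightarrow> ('m \<Rightarrow> 'z \<Rightarrow> real) \<Rightarrow> 'z \<Rightarrow> 'z set" where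
  "mpoc_tangent I h J g M F1 F2 z = {\<xi>.
     (\<forall>i\<in>I. Dfun (h i) z \<xi> = 0) \<and> (\<forall>j\<in>J0 J g z. Dfun (g j) z \<xi> = 0) \<and>
     (\<forall>m\<in>a01 M F1 F2 z \<union> a00 M F1 F2 z. Dfun (F1 m) z \<xi> = 0) \<and>
     (\<forall>m\<in>a10 M F1 F2 z \<union> a00 M F1 F2 z. Dfun (F2 m) z \<xi> = 0)}"

text \<open>Nondegenerate T-stationary point: ND1--ND4 hold (with the T-stationarity
  multipliers, which are unique under ND1).  ND4: the bilinear form D^2 L restricted
  to T is nonsingular.\<close>
definition mpoc_nondegenerate ::
  "('z::euclidean_space \<Rightarrow> real) \<Rightarrow> 'i set \<Rightarrow> ('i \<Rightarrow> 'z \<Rightarrow> real) \<Rightarrow> 'j set \<Rightarrow> ('j \<Rightarrow> 'z \<Rightarrow> real) \<Rightarrow>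
   'm set \<Rightarrow> ('m \<Rightarrow> 'z \<Rightarrow> real) \<Rightarrow> ('m \<Rightarrow> 'z \<Rightarrow> real) \<Rightarrow> 'z \<Rightarrow> bool" where
  "mpoc_nondegenerate fo I h J g M F1 F2 z \<longleftrightarrow>
     mpoc_feasible I h J g M F1 F2 z \<and>
     mpoc_LICQ I h J g M F1 F2 z \<and>
     (\<exists>lam mu s1 s2 r1 r2.
        mpoc_T_mult fo I h J g M F1 F2 z lam mu s1 s2 r1 r2 \<and>
        (\<forall>j\<in>J0 J g z. mu j > 0) \<and>
        (\<forall>m\<in>a00 M F1 F2 z. r1 m \<noteq> 0 \<and> r2 m < 0) \<and>
        (\<forall>\<xi>\<in>mpoc_tangent I h J g M F1 F2 z.
           (\<forall>\<eta>\<in>mpoc_tangent I h J g M F1 F2 z.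
              hess (mpoc_lagrangian fo I h J g M F1 F2 z lam mu s1 s2 r1 r2) z \<xi> \<eta> = 0)
           \<longrightarrow> \<xi> = 0))"

definition mpoc_degenerate ::
  "('z::euclidean_space \<Rightarrow> real) \<Rightarrow> 'i set \<Rightarrow> ('i \<Rightarrow> 'z \<Rightarrow> real) \<Rightarrow> 'j set \<Rightarrow> ('j \<Rightarrow> 'z \<Rightarrow> real) \<Rightarrow>
   'm set \<Rightarrow> ('m \<Rightarrow> 'z \<Rightarrow> real) \<Rightarrow> ('m \<Rightarrow> 'z \<Rightarrow> real) \<Rightarrow> 'z \<Rightarrow> bool" where
  "mpoc_degenerate fo I h J g M F1 F2 z \<longleftrightarrow>
     mpoc_T_stationary fo I h J g M F1 F2 z \<and> \<not> mpoc_nondegenerate fo I h J g M F1 F2 z"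

section \<open>The relaxation (R) as an MPOC in z = (x, y) :: real^'n \<times> real^'n, n = CARD('n)\<close>

definition R_I :: "nat set" where "R_I = {}"
definition R_h :: "nat \<Rightarrow> ((real^'n) \<times> (real^'n)) \<Rightarrow> real" where "R_h i z = 0"

text \<open>Inequality constraints: None is g_0, Some i is g_i.\<close>
definition R_J :: "'n option set" where "R_J = UNIV"
definition R_g :: "nat \<Rightarrow> 'n::finite option \<Rightarrow> ((real^'n) \<times> (real^'n)) \<Rightarrow> real" where
  "R_g s j z = (case j of
      None \<Rightarrow> (\<Sum>i\<in>UNIV. snd z $ i) - (real CARD('n) - real s)
    | Some i \<Rightarrow> 1 - snd z $ i)"

definition R_M :: "'n set" where "R_M = UNIV"
definition R_F1 :: "'n \<Rightarrow> ((real^'n) \<times> (real^'n)) \<Rightarrow> real" where "R_F1 i z = fst z $ i"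
definition R_F2 :: "'n \<Rightarrow> ((real^'n) \<times> (real^'n)) \<Rightarrow> real" where "R_F2 i z = snd z $ i"

definition R_obj :: "(real^'n \<Rightarrow> real) \<Rightarrow> ((real^'n) \<times> (real^'n)) \<Rightarrow> real" where
  "R_obj f z = f (fst z)"

end

theory Submission imports Defs begin

text \<open>The objective of (R) does not depend on y and all constraint functions are affine, so in
  a unit direction (0, e_j) of the y-space both the gradient of the objective and the Hessian of
  the Lagrangian vanish.  Testing T-stationarity against (0, e_j) with y_j > 0 therefore balances
  the multiplier of the sum constraint g_0 against that of the bound y_j \<le> 1.  If some
  0 < y_j < 1, either g_0 is active and its multiplier vanishes (ND2 fails), or (0, e_j) lies in
  the tangent space and in the kernel of the Hessian (ND4 fails).  If y is binary and g_0 is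
  active, the gradient of g_0 is the sum of the gradients of the active constraints y_i \<le> 1 and
  y_i \<ge> 0 (LICQ fails).  If y is binary and g_0 is inactive, feasibility forces some y_j = 1,
  whose multiplier then vanishes (ND2 fails).\<close>

lemma has_derivative_linear_plus_const:
  fixes l :: "'a::euclidean_space \<Rightarrow> real"
  assumes "linear l"
  shows "((\<lambda>z. l z + c) has_derivative l) (at z)"
  using assms linear_conv_bounded_linear bounded_linear_imp_has_derivative
    has_derivative_add_const by blast

lemma has_derivative_R_F1: "(R_F1 i has_derivative (\<lambda>\<xi>. fst \<xi> $ i)) (at z)"
  using has_derivative_linear_plus_const[of "\<lambda>\<xi>. fst \<xi> $ i" 0]
  by (simp add: R_F1_def[abs_def] linearI)

lemma has_derivative_R_F2: "(R_F2 i has_derivative (\<lambda>\<xi>. snd \<xi> $ i)) (at z)"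
  using has_derivative_linear_plus_const[of "\<lambda>\<xi>. snd \<xi> $ i" 0]
  by (simp add: R_F2_def[abs_def] linearI)

lemma has_derivative_R_g:
  fixes z :: "(real^'n) \<times> (real^'n)"
  shows "(R_g s j has_derivative
     (\<lambda>\<xi>. case j of None \<Rightarrow> (\<Sum>i\<in>UNIV. snd \<xi> $ i) | Some i \<Rightarrow> - snd \<xi> $ i)) (at z)"
proof (cases j)
  case None
  have "linear (\<lambda>\<xi>::(real^'n) \<times> (real^'n). \<Sum>i\<in>UNIV. snd \<xi> $ i)"
    by (auto intro!: linearI simp: sum.distrib sum_distrib_left)
  from has_derivative_linear_plus_const[OF this, of "real s - real CARD('n)"] None
  show ?thesis by (simp add: R_g_def[abs_def] algebra_simps)
next
  case (Some k)
  have "linear (\<lambda>\<xi>::(real^'n) \<times> (real^'n). - snd \<xi> $ k)"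
    by (auto intro!: linearI)
  from has_derivative_linear_plus_const[OF this, of 1] Some
  show ?thesis by (simp add: R_g_def[abs_def] add.commute)
qed

lemma has_derivative_R_obj:
  assumes "(f has_derivative f') (at (fst z))"
  shows "(R_obj f has_derivative (\<lambda>\<xi>. f' (fst \<xi>))) (at z)"
  unfolding R_obj_def[abs_def]
  by (rule has_derivative_compose[OF has_derivative_fst[OF has_derivative_ident] assms])

lemma frechet_derivative_R_F1 [simp]: "Dfun (R_F1 i) z \<xi> = fst \<xi> $ i"
  by (simp flip: frechet_derivative_at[OF has_derivative_R_F1])

lemma frechet_derivative_R_F2 [simp]: "Dfun (R_F2 i) z \<xi> = snd \<xi> $ i"
  by (simp flip: frechet_derivative_at[OF has_derivative_R_F2])

lemma frechet_derivative_R_g_None [simp]: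
  "Dfun (R_g s None) z \<xi> = (\<Sum>i\<in>UNIV. snd \<xi> $ i)"
  by (simp flip: frechet_derivative_at[OF has_derivative_R_g[where j=None]])

lemma frechet_derivative_R_g_Some [simp]: "Dfun (R_g s (Some i)) z \<xi> = - snd \<xi> $ i"
  by (simp flip: frechet_derivative_at[OF has_derivative_R_g[where j="Some i"]])

lemma frechet_derivative_R_obj_snd:
  assumes "f differentiable (at (fst z))"
  shows "Dfun (R_obj f) z (0, v) = 0"
proof -
  obtain f' where f': "(f has_derivative f') (at (fst z))"
    using assms differentiable_def by blast
  then show ?thesis
    using linear_0[OF has_derivative_linear[OF f']]
    by (simp flip: frechet_derivative_at[OF has_derivative_R_obj[OF f']])
qed

lemma R_bound_active_iff: "Some i \<in> J0 R_J (R_g s) z \<longleftrightarrow> snd z $ i = 1"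
  by (auto simp: J0_def R_J_def R_g_def)

lemma R_a10_iff: "i \<in> a10 R_M R_F1 R_F2 z \<longleftrightarrow> fst z $ i \<noteq> 0 \<and> snd z $ i = 0"
  by (simp add: a10_def R_M_def R_F1_def R_F2_def)

lemma R_a00_iff: "i \<in> a00 R_M R_F1 R_F2 z \<longleftrightarrow> fst z $ i = 0 \<and> snd z $ i = 0"
  by (simp add: a00_def R_M_def R_F1_def R_F2_def)

lemma R_feasible_iff:
  fixes z :: "(real^'n) \<times> (real^'n)"
  shows "mpoc_feasible R_I R_h R_J (R_g s) R_M R_F1 R_F2 z \<longleftrightarrow>
     (\<Sum>i\<in>UNIV. snd z $ i) \<ge> real CARD('n) - real s \<and>
     (\<forall>i. 0 \<le> snd z $ i \<and> snd z $ i \<le> 1 \<and> fst z $ i * snd z $ i = 0)"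
  by (auto simp: mpoc_feasible_def split_option_all R_I_def R_J_def R_M_def R_g_def
      R_F1_def R_F2_def)

lemma R_feasible_ex_pos:
  fixes z :: "(real^'n) \<times> (real^'n)"
  assumes "mpoc_feasible R_I R_h R_J (R_g s) R_M R_F1 R_F2 z" "s < CARD('n)"
  obtains j where "0 < snd z $ j"
proof -
  have "0 < (\<Sum>i\<in>UNIV. snd z $ i)"
    using assms unfolding R_feasible_iff by linarith
  then show ?thesis
    using that sum_nonpos[of UNIV "\<lambda>i. snd z $ i"] by (meson not_le)
qed

lemma hess_eqI:
  fixes \<phi> :: "'a::euclidean_space \<Rightarrow> real"
  assumes "\<And>w. (\<phi> has_derivative (\<lambda>\<eta>. \<psi> w \<eta> - K \<eta>)) (at w)"
    and "((\<lambda>w. \<psi> w \<eta>) has_derivative D) (at z)"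
  shows "hess \<phi> z \<xi> \<eta> = D \<xi>"
proof -
  have "Dfun \<phi> w \<eta> = \<psi> w \<eta> - K \<eta>" for w
    using frechet_derivative_at[OF assms(1)] by metis
  then have "hess \<phi> z \<xi> \<eta> = frechet_derivative (\<lambda>w. \<psi> w \<eta> - K \<eta>) (at z) \<xi>"
    by (simp add: hess_def)
  also have "\<dots> = D \<xi> - 0"
    using frechet_derivative_at[OF has_derivative_diff[OF assms(2) has_derivative_const]] by metis
  finally show ?thesis by simp
qed

lemma has_derivative_R_lagrangian:
  assumes "\<And>x. (f has_derivative f' x) (at x)"
  obtains K where "\<And>w. (mpoc_lagrangian (R_obj f) R_I R_h R_J (R_g s) R_M R_F1 R_F2 zb
      lam mu s1 s2 r1 r2 has_derivative (\<lambda>\<eta>. f' (fst w) (fst \<eta>) - K \<eta>)) (at w)"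
proof -
  have "(mpoc_lagrangian (R_obj f) R_I R_h R_J (R_g s) R_M R_F1 R_F2 zb lam mu s1 s2 r1 r2
      has_derivative (\<lambda>\<eta>. f' (fst w) (fst \<eta>) - (\<Sum>i\<in>R_I. lam i * 0)
        - (\<Sum>j\<in>J0 R_J (R_g s) zb. mu j *
            (case j of None \<Rightarrow> \<Sum>i\<in>UNIV. snd \<eta> $ i | Some i \<Rightarrow> - snd \<eta> $ i))
        - (\<Sum>m\<in>a01 R_M R_F1 R_F2 zb. s1 m * fst \<eta> $ m)
        - (\<Sum>m\<in>a10 R_M R_F1 R_F2 zb. s2 m * snd \<eta> $ m)
        - (\<Sum>m\<in>a00 R_M R_F1 R_F2 zb. r1 m * fst \<eta> $ m + r2 m * snd \<eta> $ m))) (at w)"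
    for w
    unfolding mpoc_lagrangian_def R_h_def
    by (intro has_derivative_diff has_derivative_sum has_derivative_add has_derivative_mult_right
        has_derivative_const has_derivative_R_obj assms has_derivative_R_g has_derivative_R_F1
        has_derivative_R_F2)
  then show thesis
    unfolding diff_diff_eq by (rule that)
qed

lemma hess_R_lagrangian_y_direction:
  assumes "C2 f"
  shows "hess (mpoc_lagrangian (R_obj f) R_I R_h R_J (R_g s) R_M R_F1 R_F2 zb lam mu s1 s2 r1 r2)
    z (0, v) \<eta> = 0"
proof -
  obtain f' f'' where f': "\<And>x. (f has_derivative f' x) (at x)"
    and f'': "\<And>x \<eta>. ((\<lambda>w. f' w \<eta>) has_derivative (\<lambda>\<xi>. f'' x \<xi> \<eta>)) (at x)"
    using assms unfolding C2_def by blast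
  obtain K where L': "\<And>w. (mpoc_lagrangian (R_obj f) R_I R_h R_J (R_g s) R_M R_F1 R_F2 zb
      lam mu s1 s2 r1 r2 has_derivative (\<lambda>\<eta>. f' (fst w) (fst \<eta>) - K \<eta>)) (at w)"
    using has_derivative_R_lagrangian[OF f'] by blast
  have "((\<lambda>w. f' (fst w) (fst \<eta>)) has_derivative (\<lambda>\<xi>. f'' (fst z) (fst \<xi>) (fst \<eta>))) (at z)"
    by (rule has_derivative_compose[OF has_derivative_fst[OF has_derivative_ident] f''])
  from hess_eqI[OF L' this] show ?thesis
    using linear_0[OF has_derivative_linear[OF f'']] by simp
qed

lemma R_T_mult_balance:
  fixes z :: "(real^'n) \<times> (real^'n)"
  assumes "mpoc_T_mult (R_obj f) R_I R_h R_J (R_g s) R_M R_F1 R_F2 z lam mu s1 s2 r1 r2"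
    and "f differentiable (at (fst z))" and "0 < snd z $ j"
  shows "(if None \<in> J0 R_J (R_g s) z then mu None else 0) =
    (if Some j \<in> J0 R_J (R_g s) z then mu (Some j) else 0)"
proof -
  let ?\<xi> = "(0, axis j 1) :: (real^'n) \<times> (real^'n)"
  have unit: "axis j 1 $ i = (if i = j then 1 else 0)" for i :: 'n
    by (simp add: axis_def)
  have "(\<Sum>k\<in>J0 R_J (R_g s) z. mu k * Dfun (R_g s k) z ?\<xi>) =
    (\<Sum>k\<in>J0 R_J (R_g s) z. (if k = None then mu None else 0) - (if k = Some j then mu (Some j) else 0))"
    by (rule sum.cong) (auto simp: unit split: option.splits)
  also have "\<dots> = (if None \<in> J0 R_J (R_g s) z then mu None else 0) -
    (if Some j \<in> J0 R_J (R_g s) z then mu (Some j) else 0)"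
    by (simp add: sum_subtractf)
  finally have J0_part: "(\<Sum>k\<in>J0 R_J (R_g s) z. mu k * Dfun (R_g s k) z ?\<xi>) = \<dots>" .
  have "(\<Sum>m\<in>a10 R_M R_F1 R_F2 z. s2 m * snd ?\<xi> $ m) = 0"
    "(\<Sum>m\<in>a00 R_M R_F1 R_F2 z. r1 m * fst ?\<xi> $ m + r2 m * snd ?\<xi> $ m) = 0"
    using assms(3) by (auto intro!: sum.neutral simp: R_a10_iff R_a00_iff unit)
  with J0_part assms(1)[unfolded mpoc_T_mult_def, THEN conjunct1, THEN spec, of ?\<xi>]
  show ?thesis
    by (simp add: frechet_derivative_R_obj_snd[OF assms(2)] R_I_def)
qed

lemma R_axis_mem_tangent:
  assumes "None \<notin> J0 R_J (R_g s) z" and "0 < snd z $ j" and "snd z $ j < 1"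
  shows "(0, axis j 1) \<in> mpoc_tangent R_I R_h R_J (R_g s) R_M R_F1 R_F2 z"
proof -
  have "k \<in> J0 R_J (R_g s) z \<Longrightarrow> Dfun (R_g s k) z (0, axis j 1) = 0" for k
    using assms by (cases k) (auto simp: R_bound_active_iff axis_def)
  moreover have "m \<in> a10 R_M R_F1 R_F2 z \<union> a00 R_M R_F1 R_F2 z \<Longrightarrow> axis j 1 $ m = 0" for m
    using assms by (auto simp: R_a10_iff R_a00_iff axis_def)
  ultimately show ?thesis
    by (auto simp: mpoc_tangent_def R_I_def)
qed

lemma R_not_LICQ:
  fixes z :: "(real^'n) \<times> (real^'n)"
  assumes "None \<in> J0 R_J (R_g s) z" and binary: "\<forall>i. snd z $ i = 0 \<or> snd z $ i = 1"
  shows "\<not> mpoc_LICQ R_I R_h R_J (R_g s) R_M R_F1 R_F2 z"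
proof
  assume licq: "mpoc_LICQ R_I R_h R_J (R_g s) R_M R_F1 R_F2 z"
  define ones where "ones = {i. snd z $ i = 1}"
  define zeros where "zeros = {i. snd z $ i = 0}"
  have "k \<in> J0 R_J (R_g s) z \<longleftrightarrow> k \<in> insert None (Some ` ones)" for k
    using assms(1) by (cases k) (auto simp: R_bound_active_iff ones_def)
  then have J0_eq: "J0 R_J (R_g s) z = insert None (Some ` ones)"
    by blast
  have bounds_eq: "a10 R_M R_F1 R_F2 z \<union> a00 R_M R_F1 R_F2 z = zeros"
    by (auto simp: R_a10_iff R_a00_iff zeros_def)
  have split_UNIV: "UNIV = ones \<union> zeros" and "ones \<inter> zeros = {}"
    using binary by (auto simp: ones_def zeros_def)
  have vanishing_combination:
    "(\<Sum>i\<in>R_I. 0 * Dfun (R_h i) z \<xi>)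
      + (\<Sum>k\<in>J0 R_J (R_g s) z. 1 * Dfun (R_g s k) z \<xi>)
      + (\<Sum>m\<in>a01 R_M R_F1 R_F2 z \<union> a00 R_M R_F1 R_F2 z. 0 * Dfun (R_F1 m) z \<xi>)
      + (\<Sum>m\<in>a10 R_M R_F1 R_F2 z \<union> a00 R_M R_F1 R_F2 z. (-1) * Dfun (R_F2 m) z \<xi>) = 0"
    for \<xi>
  proof -
    have "(\<Sum>i\<in>UNIV. snd \<xi> $ i) = (\<Sum>i\<in>ones. snd \<xi> $ i) + (\<Sum>i\<in>zeros. snd \<xi> $ i)"
      unfolding split_UNIV by (rule sum.union_disjoint) (use \<open>ones \<inter> zeros = {}\<close> in auto)
    then show ?thesis
      by (simp add: J0_eq bounds_eq R_I_def sum.reindex sum_negf)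
  qed
  have "\<forall>k\<in>J0 R_J (R_g s) z. (1::real) = 0"
    using licq[unfolded mpoc_LICQ_def, rule_format, of "\<lambda>_. 0" "\<lambda>_. 1" "\<lambda>_. 0" "\<lambda>_. -1"]
      vanishing_combination by simp
  with assms(1) show False by simp
qed

lemma R_not_nondegenerate:
  fixes xb yb :: "real^'n"
  assumes "C2 f" and "s < CARD('n)"
    and feasible: "mpoc_feasible R_I R_h R_J (R_g s) R_M R_F1 R_F2 (xb, yb)"
  shows "\<not> mpoc_nondegenerate (R_obj f) R_I R_h R_J (R_g s) R_M R_F1 R_F2 (xb, yb)"
proof
  assume "mpoc_nondegenerate (R_obj f) R_I R_h R_J (R_g s) R_M R_F1 R_F2 (xb, yb)"
  then obtain lam mu s1 s2 r1 r2
    where licq: "mpoc_LICQ R_I R_h R_J (R_g s) R_M R_F1 R_F2 (xb, yb)"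
      and mult: "mpoc_T_mult (R_obj f) R_I R_h R_J (R_g s) R_M R_F1 R_F2 (xb, yb) lam mu s1 s2 r1 r2"
      and mu_pos: "\<forall>k\<in>J0 R_J (R_g s) (xb, yb). mu k > 0"
      and nd4: "\<forall>\<xi>\<in>mpoc_tangent R_I R_h R_J (R_g s) R_M R_F1 R_F2 (xb, yb).
        (\<forall>\<eta>\<in>mpoc_tangent R_I R_h R_J (R_g s) R_M R_F1 R_F2 (xb, yb).
          hess (mpoc_lagrangian (R_obj f) R_I R_h R_J (R_g s) R_M R_F1 R_F2 (xb, yb)
            lam mu s1 s2 r1 r2) (xb, yb) \<xi> \<eta> = 0) \<longrightarrow> \<xi> = 0"
    unfolding mpoc_nondegenerate_def by blast
  have "f differentiable (at xb)"
    using assms(1) unfolding C2_def differentiable_def by blast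
  note balance = R_T_mult_balance[OF mult, simplified, OF this]
  have y_bounds: "0 \<le> yb $ i \<and> yb $ i \<le> 1" for i
    using feasible unfolding R_feasible_iff by simp
  show False
  proof (cases "None \<in> J0 R_J (R_g s) (xb, yb)")
    case True
    show False
    proof (cases "\<exists>j. 0 < yb $ j \<and> yb $ j < 1")
      case True
      then obtain j where "0 < yb $ j" "yb $ j < 1" by blast
      with balance[of j] \<open>None \<in> J0 R_J (R_g s) (xb, yb)\<close> mu_pos show False
        by (auto simp: R_bound_active_iff)
    next
      case False
      with y_bounds have "\<forall>i. yb $ i = 0 \<or> yb $ i = 1"
        by (metis less_eq_real_def)
      with R_not_LICQ[of s "(xb, yb)"] True licq show False by simp
    qed
  next
    case False
    obtain j where j: "0 < yb $ j"
      using R_feasible_ex_pos[OF feasible assms(2)] by auto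
    show False
    proof (cases "yb $ j = 1")
      case True
      then have "Some j \<in> J0 R_J (R_g s) (xb, yb)"
        by (simp add: R_bound_active_iff)
      with balance[OF j] False mu_pos show False
        by fastforce
    next
      case False
      with y_bounds j have "(0, axis j 1) \<in> mpoc_tangent R_I R_h R_J (R_g s) R_M R_F1 R_F2 (xb, yb)"
        using R_axis_mem_tangent[of s "(xb, yb)"] \<open>None \<notin> J0 R_J (R_g s) (xb, yb)\<close>
        by (simp add: less_le)
      with nd4 hess_R_lagrangian_y_direction[OF assms(1)]
      have "(0, axis j 1) = (0 :: (real^'n) \<times> (real^'n))"
        by blast
      then show False
        by (simp add: zero_prod_def)
    qed
  qed
qed

theorem mainTheorem13:
  fixes f :: "real^'n \<Rightarrow> real" and s :: nat and xb yb :: "real^'n"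
  assumes "C2 f"
    and "s < CARD('n)"
    and "mpoc_T_stationary (R_obj f) R_I R_h R_J (R_g s) R_M R_F1 R_F2 (xb, yb)"
  shows "mpoc_degenerate (R_obj f) R_I R_h R_J (R_g s) R_M R_F1 R_F2 (xb, yb)"
proof -
  have "mpoc_feasible R_I R_h R_J (R_g s) R_M R_F1 R_F2 (xb, yb)"
    using assms(3) unfolding mpoc_T_stationary_def by blast
  with R_not_nondegenerate[OF assms(1,2)] assms(3) show ?thesis
    unfolding mpoc_degenerate_def by blast
qed

end
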